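(* For every integer $s \geq 1$, $$\mathsf {Brac}_{2,s}=\mathsf {Brac}_{2}= \left\{ \big( (p, 1-p), (1-p,p) \big) \, : \, p\in[0,1]\right\}.$$
   Context: $\Delta_d=\{\alpha\in\mathbb R^d:\alpha_i\ge0,\ \sum_i\alpha_i=1\}$. $\mathsf{Brac}_d=\{(\alpha,\beta)\in\Delta_d^2:\ \forall i,\ \sqrt{\alpha_i\beta_i}\le\sum_{j\ne i}\sqrt{\alpha_j\beta_j}\}$. For $s\ge1$, $\mathsf{Brac}_{d,s}$ is the set of $(\alpha,\beta)\in\Delta_d^2$ for which there exist $A_1,\dots,A_d,B_1,\dots,B_d\in M_s(\mathbb C)$ with $\sum_i A_iA_i^*=\sum_iB_iB_i^*=I_s$, $\sum_iA_iB_i^*=0$, and $\tfrac1s\|A_i\|_F^2=\alpha_i$, $\tfrac1s\|B_i\|_F^2=\beta_i$ for all $i$, where $\|X\|_F=\operatorname{Tr}(XX^* )^{1/2}$. *)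

theory Defs
  imports "HOL-Analysis.Analysis"
begin

definition prob_simplex :: "nat \<Rightarrow> real list set" where
  "prob_simplex d = {a. length a = d \<and> (\<forall>i<d. 0 \<le> a ! i) \<and> (\<Sum>i<d. a ! i) = 1}"

definition Brac :: "nat \<Rightarrow> (real list \<times> real list) set" where
  "Brac d = {(a, b). a \<in> prob_simplex d \<and> b \<in> prob_simplex d \<and>
     (\<forall>i<d. sqrt (a ! i * b ! i) \<le> (\<Sum>j\<in>{..<d} - {i}. sqrt (a ! j * b ! j)))}"

definition cstar :: "complex^'n^'n \<Rightarrow> complex^'n^'n" where
  "cstar A = (\<chi> i j. cnj (A $ j $ i))"

definition frob_sq :: "complex^'n^'n \<Rightarrow> real" where
  "frob_sq X = Re (trace (X ** cstar X))"

text \<open>Brac_{d,s}, where s = CARD('s) is the matrix size given by the finite index type 's.\<close>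
definition BracS :: "nat \<Rightarrow> 's::finite itself \<Rightarrow> (real list \<times> real list) set" where
  "BracS d _ = {(a, b). a \<in> prob_simplex d \<and> b \<in> prob_simplex d \<and>
     (\<exists>A B :: nat \<Rightarrow> complex^'s^'s.
        (\<Sum>i<d. A i ** cstar (A i)) = mat 1 \<and>
        (\<Sum>i<d. B i ** cstar (B i)) = mat 1 \<and>
        (\<Sum>i<d. A i ** cstar (B i)) = 0 \<and>
        (\<forall>i<d. frob_sq (A i) / real CARD('s) = a ! i \<and>
                frob_sq (B i) / real CARD('s) = b ! i))}"

end

theory Submission
  imports Defs
begin

text \<open>
  The three defining identities of \<open>Brac\<^sub>2\<^sub>,\<^sub>s\<close> say that the \<open>2s \<times> 2s\<close> block matrix
  \<open>U = [A\<^sub>1 A\<^sub>2; B\<^sub>1 B\<^sub>2]\<close> satisfies \<open>U U\<^sup>* = I\<close>. A one-sided inverse of a square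
  matrix is two-sided, so also \<open>U\<^sup>* U = I\<close>, and the trace of its upper left block
  \<open>A\<^sub>1\<^sup>* A\<^sub>1 + B\<^sub>1\<^sup>* B\<^sub>1 = I\<^sub>s\<close> gives \<open>\<alpha>\<^sub>1 + \<beta>\<^sub>1 = 1\<close>. On \<open>\<Delta>\<^sub>2\<close> this is exactly \<open>Brac\<^sub>2\<close>,
  whose two inequalities amount to \<open>\<alpha>\<^sub>1\<beta>\<^sub>1 = \<alpha>\<^sub>2\<beta>\<^sub>2\<close>. Conversely, the point with
  parameter \<open>p\<close> is realised by the real orthogonal matrix \<open>[\<surd>p \<surd>(1-p); \<surd>(1-p) -\<surd>p]\<close>
  tensored with \<open>I\<^sub>s\<close>.
\<close>

lemma cstar_cstar [simp]: "cstar (cstar A) = A"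
  by (simp add: cstar_def vec_eq_iff)

lemma cstar_add: "cstar (A + B) = cstar A + cstar B"
  by (simp add: cstar_def vec_eq_iff)

lemma cstar_zero [simp]: "cstar 0 = 0"
  by (simp add: cstar_def vec_eq_iff)

lemma cstar_mult: "cstar (A ** B) = cstar B ** cstar A"
  by (simp add: cstar_def vec_eq_iff matrix_matrix_mult_def mult.commute)

lemma cstar_mat: "cstar (mat c) = mat (cnj c)"
  by (simp add: cstar_def vec_eq_iff mat_def)

lemma mat_add_mat: "mat c + mat d = (mat (c + d) :: 'a::monoid_add^'n^'n)"
  by (simp add: vec_eq_iff mat_def)

lemma mat_mult_mat: "mat c ** mat d = (mat (c * d) :: 'a::semiring_1^'n^'n)"
proof -
  have "mat c $ i $ k * mat d $ k $ j = (if k = i then (if i = j then c * d else 0) else 0)"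
    for i j k :: 'n
    by (simp add: mat_def)
  then show ?thesis
    by (simp add: vec_eq_iff matrix_matrix_mult_def mat_def)
qed

lemma trace_mat: "trace (mat c :: 'a::semiring_1^'n^'n) = of_nat CARD('n) * c"
  by (simp add: trace_def mat_def)

lemma frob_sq_eq_trace: "frob_sq X = Re (trace (cstar X ** X))"
  unfolding frob_sq_def by (subst trace_mul_sym) (rule refl)

lemma frob_sq_mat: "frob_sq (mat c :: complex^'n^'n) = (cmod c)\<^sup>2 * real CARD('n)"
  by (simp add: frob_sq_def cstar_mat mat_mult_mat trace_mat cmod_power2 power2_eq_square)
    (simp add: cmod_def power2_eq_square)

lemma sum_UNIV_Plus:
  "(\<Sum>x\<in>(UNIV :: ('a::finite + 'b::finite) set). g x) =
    (\<Sum>x\<in>UNIV. g (Inl x)) + (\<Sum>x\<in>UNIV. g (Inr x))"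
  using sum.Plus[of UNIV UNIV g] by (simp add: comp_def)

definition block_mat ::
    "'a^'n^'m \<Rightarrow> 'a^'k^'m \<Rightarrow> 'a^'n^'l \<Rightarrow> 'a^'k^'l \<Rightarrow> 'a^('n + 'k)^('m + 'l)" where
  "block_mat A B C D = (\<chi> r c. case r of
       Inl i \<Rightarrow> (case c of Inl j \<Rightarrow> A $ i $ j | Inr j \<Rightarrow> B $ i $ j)
     | Inr i \<Rightarrow> (case c of Inl j \<Rightarrow> C $ i $ j | Inr j \<Rightarrow> D $ i $ j))"

lemma block_mat_eq_iff:
  "block_mat A B C D = block_mat A' B' C' D' \<longleftrightarrow> A = A' \<and> B = B' \<and> C = C' \<and> D = D'"
  by (auto simp: block_mat_def vec_eq_iff split: sum.splits)

lemma block_mat_mult: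
  fixes A :: "'a::semiring_1^'n::finite^'m" and B :: "'a^'k::finite^'m"
  shows "block_mat A B C D ** block_mat E F G H =
    block_mat (A ** E + B ** G) (A ** F + B ** H) (C ** E + D ** G) (C ** F + D ** H)"
  by (simp add: vec_eq_iff block_mat_def matrix_matrix_mult_def sum_UNIV_Plus split: sum.split)

lemma mat_eq_block_mat: "mat c = block_mat (mat c) 0 0 (mat c)"
  by (simp add: vec_eq_iff block_mat_def mat_def split: sum.split)

lemma cstar_block_mat:
  "cstar (block_mat A B C D) = block_mat (cstar A) (cstar C) (cstar B) (cstar D)"
  by (simp add: vec_eq_iff block_mat_def cstar_def split: sum.split)

lemma frob_sq_add_eq_card_if_block_unitary:
  fixes A0 A1 B0 B1 :: "complex^'n::finite^'n"
  assumes A: "A0 ** cstar A0 + A1 ** cstar A1 = mat 1"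
    and B: "B0 ** cstar B0 + B1 ** cstar B1 = mat 1"
    and AB: "A0 ** cstar B0 + A1 ** cstar B1 = 0"
  shows "frob_sq A0 + frob_sq B0 = real CARD('n)"
proof -
  let ?U = "block_mat A0 A1 B0 B1"
  have BA: "B0 ** cstar A0 + B1 ** cstar A1 = 0"
    using arg_cong[OF AB, of cstar] by (simp add: cstar_add cstar_mult)
  have "?U ** cstar ?U = mat 1"
    by (simp add: cstar_block_mat block_mat_mult A B AB BA mat_eq_block_mat[of 1])
  then have "cstar ?U ** ?U = mat 1"
    by (rule matrix_left_right_inverse[THEN iffD1])
  then have "cstar A0 ** A0 + cstar B0 ** B0 = mat 1"
    by (simp add: cstar_block_mat block_mat_mult mat_eq_block_mat[of 1] block_mat_eq_iff)
  then have "trace (cstar A0 ** A0) + trace (cstar B0 ** B0) = of_nat CARD('n)"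
    by (metis trace_add trace_I)
  then have "Re (trace (cstar A0 ** A0) + trace (cstar B0 ** B0)) = real CARD('n)"
    by simp
  then show ?thesis
    by (simp add: frob_sq_eq_trace)
qed

lemma prob_simplex_2_iff:
  "a \<in> prob_simplex 2 \<longleftrightarrow> (\<exists>x. 0 \<le> x \<and> x \<le> 1 \<and> a = [x, 1 - x])"
proof
  assume "a \<in> prob_simplex 2"
  then have "length a = 2" "0 \<le> a ! 0" "0 \<le> a ! 1" "a ! 1 = 1 - a ! 0"
    by (auto simp: prob_simplex_def numeral_2_eq_2)
  moreover from this(1) have "a = [a ! 0, a ! 1]"
    by (cases a rule: list.exhaust[case_product list.exhaust[of "tl a"]]) (auto simp: numeral_2_eq_2)
  ultimately show "\<exists>x. 0 \<le> x \<and> x \<le> 1 \<and> a = [x, 1 - x]"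
    by (metis diff_ge_0_iff_ge)
qed (auto simp: prob_simplex_def numeral_2_eq_2 less_Suc_eq)

lemma all_less_2_iff: "(\<forall>i<2::nat. P i) \<longleftrightarrow> P 0 \<and> P 1"
  by (auto simp: less_2_cases_iff)

lemma Brac_2_iff:
  "(a, b) \<in> Brac 2 \<longleftrightarrow> a \<in> prob_simplex 2 \<and> b \<in> prob_simplex 2 \<and> a ! 0 + b ! 0 = 1"
proof -
  have diffs: "{..<2::nat} - {0} = {1}" "{..<2::nat} - {1} = {0}"
    by auto
  have "(\<forall>i<2. sqrt (a ! i * b ! i) \<le> (\<Sum>j\<in>{..<2} - {i}. sqrt (a ! j * b ! j))) \<longleftrightarrow>
      sqrt (a ! 0 * b ! 0) = sqrt (a ! 1 * b ! 1)"
    unfolding all_less_2_iff diffs by auto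
  then have "(a, b) \<in> Brac 2 \<longleftrightarrow> a \<in> prob_simplex 2 \<and> b \<in> prob_simplex 2 \<and>
      sqrt (a ! 0 * b ! 0) = sqrt (a ! 1 * b ! 1)"
    unfolding Brac_def by blast
  also have "\<dots> \<longleftrightarrow> a \<in> prob_simplex 2 \<and> b \<in> prob_simplex 2 \<and> a ! 0 + b ! 0 = 1"
    by (auto simp: prob_simplex_2_iff algebra_simps)
  finally show ?thesis .
qed

lemma BracS_2_subset_Brac_2: "BracS 2 TYPE('s::finite) \<subseteq> Brac 2"
proof clarify
  fix a b assume "(a, b) \<in> BracS 2 TYPE('s)"
  then obtain A B :: "nat \<Rightarrow> complex^'s^'s" where
    simplex: "a \<in> prob_simplex 2" "b \<in> prob_simplex 2"
    and unitary: "A 0 ** cstar (A 0) + A 1 ** cstar (A 1) = mat 1"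
      "B 0 ** cstar (B 0) + B 1 ** cstar (B 1) = mat 1"
      "A 0 ** cstar (B 0) + A 1 ** cstar (B 1) = 0"
    and frob: "frob_sq (A 0) / real CARD('s) = a ! 0" "frob_sq (B 0) / real CARD('s) = b ! 0"
    by (auto simp: BracS_def numeral_2_eq_2)
  have "frob_sq (A 0) + frob_sq (B 0) = real CARD('s)"
    using unitary by (rule frob_sq_add_eq_card_if_block_unitary)
  then have "a ! 0 + b ! 0 = 1"
    by (simp flip: frob add_divide_distrib)
  with simplex show "(a, b) \<in> Brac 2"
    unfolding Brac_2_iff by blast
qed

lemma Brac_2_subset_BracS_2: "Brac 2 \<subseteq> BracS 2 TYPE('s::finite)"
proof clarify
  fix a b assume "(a, b) \<in> Brac 2"
  then obtain p where p: "0 \<le> p" "p \<le> 1" and ab: "a = [p, 1 - p]" "b = [1 - p, p]"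
    by (auto simp: Brac_2_iff prob_simplex_2_iff)
  define u v where "u = sqrt p" and "v = sqrt (1 - p)"
  define A B :: "nat \<Rightarrow> complex^'s^'s" where
    "A i = mat (of_real (if i = 0 then u else v))" and
    "B i = mat (of_real (if i = 0 then v else - u))" for i
  have uv: "of_real u * of_real u = (of_real p :: complex)"
    "of_real v * of_real v = (of_real (1 - p) :: complex)"
    using p by (simp_all add: u_def v_def flip: of_real_mult)
  have "(\<Sum>i<2. A i ** cstar (A i)) = mat 1" "(\<Sum>i<2. B i ** cstar (B i)) = mat 1"
    by (simp_all add: numeral_2_eq_2 A_def B_def cstar_mat mat_mult_mat mat_add_mat uv)
  moreover have "(\<Sum>i<2. A i ** cstar (B i)) = 0"
    by (simp add: numeral_2_eq_2 A_def B_def cstar_mat mat_mult_mat mat_add_mat algebra_simps)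
  moreover have "\<forall>i<2. frob_sq (A i) / real CARD('s) = a ! i \<and> frob_sq (B i) / real CARD('s) = b ! i"
    using p by (auto simp: less_2_cases_iff A_def B_def frob_sq_mat ab u_def v_def)
  moreover have "a \<in> prob_simplex 2" "b \<in> prob_simplex 2"
    using p ab by (auto simp: prob_simplex_2_iff)
  ultimately show "(a, b) \<in> BracS 2 TYPE('s)"
    unfolding BracS_def by blast
qed

theorem proposition3p9:
  shows "BracS 2 TYPE('s::finite) = Brac 2 \<and>
         Brac 2 = {([p, 1 - p], [1 - p, p]) | p :: real. 0 \<le> p \<and> p \<le> 1}"
proof
  show "BracS 2 TYPE('s::finite) = Brac 2"
    using BracS_2_subset_Brac_2 Brac_2_subset_BracS_2 by blast
  show "Brac 2 = {([p, 1 - p], [1 - p, p]) | p :: real. 0 \<le> p \<and> p \<le> 1}"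
    by (auto simp: Brac_2_iff prob_simplex_2_iff)
qed

end
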